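(* For integers $n,m\ge 3$, ${\rm dim}_s(K_{n,n}^{-M}\diamond K_{m,m}^{-M})=3nm$.
   Context: The modular product $G\diamond H$ has vertex set $V(G)\times V(H)$; distinct vertices $(g,h)$ and $(g',h')$ are adjacent iff ($g=g'$ and $hh'\in E(H)$), or ($gg'\in E(G)$ and $h=h'$), or ($gg'\in E(G)$ and $hh'\in E(H)$), or ($g\neq g'$, $h\neq h'$, $gg'\notin E(G)$ and $hh'\notin E(H)$). $K_{n,n}^{-M}$ is $K_{n,n}$ with a perfect matching removed. ${\rm dim}_s(X)$ is the strong metric dimension: the minimum size of $S\subseteq V(X)$ such that for all distinct $x,y$ some $z\in S$ has $d_X(y,z)=d_X(y,x)+d_X(x,z)$ or $d_X(x,z)=d_X(x,y)+d_X(y,z)$. *)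

theory Defs
  imports Main
begin

text \<open>Simple graphs are given by a vertex set V and a symmetric irreflexive
adjacency relation E (only its restriction to V matters).\<close>

fun gwalk :: "'a set \<Rightarrow> ('a \<Rightarrow> 'a \<Rightarrow> bool) \<Rightarrow> nat \<Rightarrow> 'a \<Rightarrow> 'a \<Rightarrow> bool" where
  "gwalk V E 0 x y = (x = y \<and> x \<in> V)"
| "gwalk V E (Suc k) x y = (x \<in> V \<and> (\<exists>z\<in>V. E x z \<and> gwalk V E k z y))"

text \<open>Graph distance: length of a shortest walk (graphs considered here are connected).\<close>
definition gdist :: "'a set \<Rightarrow> ('a \<Rightarrow> 'a \<Rightarrow> bool) \<Rightarrow> 'a \<Rightarrow> 'a \<Rightarrow> nat" where
  "gdist V E x y = (LEAST k. gwalk V E k x y)"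

definition strong_resolving :: "'a set \<Rightarrow> ('a \<Rightarrow> 'a \<Rightarrow> bool) \<Rightarrow> 'a set \<Rightarrow> bool" where
  "strong_resolving V E S \<longleftrightarrow> S \<subseteq> V \<and>
     (\<forall>x\<in>V. \<forall>y\<in>V. x \<noteq> y \<longrightarrow>
        (\<exists>z\<in>S. gdist V E y z = gdist V E y x + gdist V E x z
              \<or> gdist V E x z = gdist V E x y + gdist V E y z))"

definition strong_metric_dim :: "'a set \<Rightarrow> ('a \<Rightarrow> 'a \<Rightarrow> bool) \<Rightarrow> nat" where
  "strong_metric_dim V E = (LEAST k. \<exists>S. finite S \<and> strong_resolving V E S \<and> card S = k)"

definition mod_prod_edge :: "('a \<Rightarrow> 'a \<Rightarrow> bool) \<Rightarrow> ('b \<Rightarrow> 'b \<Rightarrow> bool) \<Rightarrow> ('a \<times> 'b) \<Rightarrow> ('a \<times> 'b) \<Rightarrow> bool" where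
  "mod_prod_edge EG EH p q \<longleftrightarrow> p \<noteq> q \<and>
     (let g = fst p; h = snd p; g' = fst q; h' = snd q in
        (g = g' \<and> EH h h') \<or> (EG g g' \<and> h = h') \<or> (EG g g' \<and> EH h h') \<or>
        (g \<noteq> g' \<and> h \<noteq> h' \<and> \<not> EG g g' \<and> \<not> EH h h'))"

text \<open>K_{n,n} minus a perfect matching: vertices (side, index) with index < n;
  (b,i) ~ (c,j) iff b \<noteq> c and i \<noteq> j (the matching {(False,i),(True,i)} is removed).\<close>
definition knnM_V :: "nat \<Rightarrow> (bool \<times> nat) set" where
  "knnM_V n = {(b, i). i < n}"

definition knnM_E :: "(bool \<times> nat) \<Rightarrow> (bool \<times> nat) \<Rightarrow> bool" where
  "knnM_E u v \<longleftrightarrow> fst u \<noteq> fst v \<and> snd u \<noteq> snd v"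

end

theory Submission imports Defs begin

text \<open>
Distances in the modular product of two copies of \<open>K\<^sub>n\<^sub>,\<^sub>n\<^sup>-\<^sup>M\<close> depend only on how the
coordinates of the two vertices are related (equal, adjacent, on the same side, or matched)
and never exceed 3. For fixed indices i, j the four vertices ((a,i),(b,j)) form a block, and for
two vertices x, y of a block no vertex other than x lies beyond x on a geodesic from y. Hence a
strong resolving set misses at most one vertex of each block and has at least 3nm elements.
Conversely, the vertices with some coordinate on the True side form a strong resolving set of
size 3nm: for any two of the remaining vertices ((False,i),(False,j)), one of them lies on a
geodesic from the other to a vertex of that set.
\<close>

lemma gwalk_imp_potential_le:
  assumes "d q = 0"
    and "\<And>x y. x \<in> V \<Longrightarrow> y \<in> V \<Longrightarrow> E x y \<Longrightarrow> d x \<le> d y + 1"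
  shows "gwalk V E k x q \<Longrightarrow> d x \<le> k"
proof (induction k arbitrary: x)
  case 0
  then show ?case using assms(1) by simp
next
  case (Suc k)
  then obtain z where "x \<in> V" "z \<in> V" "E x z" "gwalk V E k z q" by auto
  then show ?case using Suc.IH assms(2)[of x z] by fastforce
qed

lemma gwalk_descent:
  assumes "\<And>x. x \<in> V \<Longrightarrow> d x = 0 \<Longrightarrow> x = q"
    and "\<And>x. x \<in> V \<Longrightarrow> 0 < d x \<Longrightarrow> \<exists>w\<in>V. E x w \<and> d w + 1 = d x"
  shows "x \<in> V \<Longrightarrow> gwalk V E (d x) x q"
proof (induction "d x" arbitrary: x)
  case 0
  then show ?case using assms(1) by (metis gwalk.simps(1))
next
  case (Suc k)
  then obtain w where "w \<in> V" "E x w" "d w + 1 = d x" using assms(2) by (metis zero_less_Suc)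
  then show ?case using Suc by (metis Suc_eq_plus1 add_right_cancel gwalk.simps(2))
qed

lemma gdist_eqI:
  assumes "p \<in> V" "q \<in> V"
    and zero: "\<And>x. x \<in> V \<Longrightarrow> d x = 0 \<longleftrightarrow> x = q"
    and lipschitz: "\<And>x y. x \<in> V \<Longrightarrow> y \<in> V \<Longrightarrow> E x y \<Longrightarrow> d x \<le> d y + 1"
    and descent: "\<And>x. x \<in> V \<Longrightarrow> 0 < d x \<Longrightarrow> \<exists>w\<in>V. E x w \<and> d w + 1 = d x"
  shows "gdist V E p q = d p"
  unfolding gdist_def
proof (rule Least_equality)
  show "gwalk V E (d p) p q" using gwalk_descent[of V d q E] zero descent \<open>p \<in> V\<close> by blast
  show "\<And>k. gwalk V E k p q \<Longrightarrow> d p \<le> k"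
    using gwalk_imp_potential_le[of d q V E] zero lipschitz \<open>q \<in> V\<close> by blast
qed

lemma strong_resolving_contains_either:
  assumes "strong_resolving V E S" "x \<in> V" "y \<in> V" "x \<noteq> y"
    and "\<And>z. z \<in> V \<Longrightarrow> gdist V E y z = gdist V E y x + gdist V E x z \<Longrightarrow> z = x"
    and "\<And>z. z \<in> V \<Longrightarrow> gdist V E x z = gdist V E x y + gdist V E y z \<Longrightarrow> z = y"
  shows "x \<in> S \<or> y \<in> S"
proof -
  obtain z where "z \<in> S" "gdist V E y z = gdist V E y x + gdist V E x z
      \<or> gdist V E x z = gdist V E x y + gdist V E y z"
    using assms(1-4) unfolding strong_resolving_def by blast
  moreover have "z \<in> V" using \<open>z \<in> S\<close> assms(1) by (auto simp: strong_resolving_def)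
  ultimately show ?thesis using assms(5,6) by metis
qed

lemma gdist_self: "x \<in> V \<Longrightarrow> gdist V E x x = 0"
  unfolding gdist_def by (rule Least_equality) auto

lemma strong_resolvingI:
  assumes "S \<subseteq> V"
    and "\<And>x y. x \<in> V - S \<Longrightarrow> y \<in> V - S \<Longrightarrow> x \<noteq> y
           \<Longrightarrow> \<exists>z\<in>S. gdist V E y z = gdist V E y x + gdist V E x z"
  shows "strong_resolving V E S"
  unfolding strong_resolving_def
proof (intro conjI ballI impI)
  fix x y assume "x \<in> V" "y \<in> V" "x \<noteq> y"
  then consider "x \<in> S" | "y \<in> S" | "x \<in> V - S" "y \<in> V - S" by blast
  then show "\<exists>z\<in>S. gdist V E y z = gdist V E y x + gdist V E x z
              \<or> gdist V E x z = gdist V E x y + gdist V E y z"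
  proof cases
    case 1
    then show ?thesis using gdist_self[OF \<open>x \<in> V\<close>] by (intro bexI[of _ x]) simp_all
  next
    case 2
    then show ?thesis using gdist_self[OF \<open>y \<in> V\<close>] by (intro bexI[of _ y]) simp_all
  next
    case 3
    then show ?thesis using assms(2) \<open>x \<noteq> y\<close> by blast
  qed
qed (rule assms(1))

lemma card_le_Suc_card_Int:
  assumes "finite B" and "\<And>x y. x \<in> B \<Longrightarrow> y \<in> B \<Longrightarrow> x \<noteq> y \<Longrightarrow> x \<in> S \<or> y \<in> S"
  shows "card B \<le> Suc (card (S \<inter> B))"
proof -
  have "card (B - S) \<le> Suc 0"
    using assms by (subst card_le_Suc0_iff_eq) auto
  moreover have "card B = card (S \<inter> B) + card (B - S)"
    using card_Int_Diff[OF assms(1), of S] by (simp add: Int_commute)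
  ultimately show ?thesis by linarith
qed

datatype position = Same | Adjacent | SameSide | Matched

text \<open>In \<open>K\<^sub>n\<^sub>,\<^sub>n\<^sup>-\<^sup>M\<close> these four cases have distances 0, 1, 2, 3 respectively.\<close>

definition position :: "bool \<times> nat \<Rightarrow> bool \<times> nat \<Rightarrow> position" where
  "position u v =
     (if snd u = snd v then (if fst u = fst v then Same else Matched)
      else if fst u = fst v then SameSide else Adjacent)"

definition close :: "position \<Rightarrow> bool" where
  "close s \<longleftrightarrow> s = Same \<or> s = Adjacent"

text \<open>Product vertices are adjacent iff their coordinates are both close or both far; all other
  distinct pairs have a common neighbour, except a pair equal in one coordinate and matched in
  the other.\<close>

definition product_dist :: "position \<Rightarrow> position \<Rightarrow> nat" where
  "product_dist s t =
     (if s = Same \<and> t = Same then 0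
      else if close s \<longleftrightarrow> close t then 1
      else if s = Same \<and> t = Matched \<or> s = Matched \<and> t = Same then 3 else 2)"

definition mod_prod_dist :: "(bool \<times> nat) \<times> (bool \<times> nat) \<Rightarrow> (bool \<times> nat) \<times> (bool \<times> nat) \<Rightarrow> nat" where
  "mod_prod_dist p q = product_dist (position (fst p) (fst q)) (position (snd p) (snd q))"

lemmas mod_prod_dist_defs = mod_prod_dist_def product_dist_def position_def close_def

lemma mod_prod_edge_knnM_iff: "mod_prod_edge knnM_E knnM_E p q \<longleftrightarrow> mod_prod_dist p q = 1"
  by (auto simp: mod_prod_edge_def knnM_E_def Let_def mod_prod_dist_defs prod_eq_iff)

lemma mod_prod_dist_eq_0_iff: "mod_prod_dist p q = 0 \<longleftrightarrow> p = q"
  by (auto simp: mod_prod_dist_defs prod_eq_iff)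

lemma mod_prod_dist_le_3: "mod_prod_dist p q \<le> 3"
  by (auto simp: mod_prod_dist_defs)

lemma mod_prod_dist_3_no_common_neighbour:
  "mod_prod_dist p q = 3 \<Longrightarrow> mod_prod_dist p w = 1 \<Longrightarrow> mod_prod_dist w q \<noteq> 1"
  by (auto simp: mod_prod_dist_defs split: if_splits)

lemma mod_prod_dist_edge_le:
  assumes "mod_prod_dist x y = 1"
  shows "mod_prod_dist x q \<le> mod_prod_dist y q + 1"
proof -
  consider "mod_prod_dist y q = 0" | "mod_prod_dist y q = 1" | "2 \<le> mod_prod_dist y q" by linarith
  then show ?thesis
  proof cases
    case 1
    then show ?thesis using assms by (simp add: mod_prod_dist_eq_0_iff)
  next
    case 2
    then show ?thesis
      using assms mod_prod_dist_le_3[of x q] mod_prod_dist_3_no_common_neighbour[of x q y] by linarith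
  next
    case 3
    then show ?thesis using mod_prod_dist_le_3[of x q] by linarith
  qed
qed

lemma ex_less_avoiding: "3 \<le> (n::nat) \<Longrightarrow> \<exists>x<n. x \<noteq> i \<and> x \<noteq> k"
  by presburger

lemma mod_prod_dist_descent:
  assumes "3 \<le> n" "3 \<le> m" "p \<in> knnM_V n \<times> knnM_V m" "q \<in> knnM_V n \<times> knnM_V m"
    and "0 < mod_prod_dist p q"
  shows "\<exists>w\<in>knnM_V n \<times> knnM_V m. mod_prod_dist p w = 1 \<and> mod_prod_dist w q + 1 = mod_prod_dist p q"
proof -
  obtain a i b j c k d l where p: "p = ((a,i),(b,j))" and q: "q = ((c,k),(d,l))"
    by (metis prod.exhaust)
  obtain x where x: "x < n" "x \<noteq> i" "x \<noteq> k" using ex_less_avoiding[OF assms(1)] by blast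
  obtain y where y: "y < m" "y \<noteq> j" "y \<noteq> l" using ex_less_avoiding[OF assms(2)] by blast
  let ?P = "\<lambda>w. w \<in> knnM_V n \<times> knnM_V m \<and> mod_prod_dist p w = 1 \<and> mod_prod_dist w q + 1 = mod_prod_dist p q"
  have "?P q \<or> ?P ((a,i),(\<not>b,y)) \<or> ?P ((\<not>a,x),(b,j)) \<or> ?P ((c,k),(\<not>d,y))
      \<or> ?P ((\<not>a,x),(d,l)) \<or> ?P ((a,i),(d,y)) \<or> ?P ((c,x),(b,j))"
    using assms x y unfolding p q
    by (cases "a = c"; cases "i = k"; cases "b = d"; cases "j = l"; simp add: mod_prod_dist_defs knnM_V_def)
  then show ?thesis by blast
qed

lemma gdist_knnM_mod_prod:
  assumes "3 \<le> n" "3 \<le> m" "p \<in> knnM_V n \<times> knnM_V m" "q \<in> knnM_V n \<times> knnM_V m"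
  shows "gdist (knnM_V n \<times> knnM_V m) (mod_prod_edge knnM_E knnM_E) p q = mod_prod_dist p q"
  using assms mod_prod_dist_descent[OF assms(1,2)] mod_prod_dist_edge_le
  by (intro gdist_eqI) (auto simp: mod_prod_edge_knnM_iff mod_prod_dist_eq_0_iff)

definition block :: "nat \<Rightarrow> nat \<Rightarrow> ((bool \<times> nat) \<times> (bool \<times> nat)) set" where
  "block i j = {((False,i),(False,j)), ((False,i),(True,j)), ((True,i),(False,j)), ((True,i),(True,j))}"

lemma mem_block_iff: "p \<in> block i j \<longleftrightarrow> snd (fst p) = i \<and> snd (snd p) = j"
  by (cases p) (auto simp: block_def prod_eq_iff)

lemma card_eq_sum_blocks:
  assumes "S \<subseteq> knnM_V n \<times> knnM_V m"
  shows "card S = (\<Sum>(i, j)\<in>{..<n} \<times> {..<m}. card (S \<inter> block i j))"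
proof -
  have "S = (\<Union>(i, j)\<in>{..<n} \<times> {..<m}. S \<inter> block i j)"
    using assms by (auto simp: mem_block_iff knnM_V_def)
  also have "card \<dots> = (\<Sum>(i, j)\<in>{..<n} \<times> {..<m}. card (S \<inter> block i j))"
    by (subst card_UN_disjoint) (auto simp: block_def split_def)
  finally show ?thesis .
qed

lemma mod_prod_dist_same_block_geodesic:
  assumes "x \<in> block i j" "y \<in> block i j" "x \<noteq> y"
    and "mod_prod_dist y z = mod_prod_dist y x + mod_prod_dist x z"
  shows "z = x"
  using assms by (auto simp: mem_block_iff mod_prod_dist_defs prod_eq_iff split: if_splits)

lemma three_le_card_Int_block:
  assumes "3 \<le> n" "3 \<le> m" "i < n" "j < m"
    and S: "strong_resolving (knnM_V n \<times> knnM_V m) (mod_prod_edge knnM_E knnM_E) S"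
  shows "3 \<le> card (S \<inter> block i j)"
proof -
  let ?V = "knnM_V n \<times> knnM_V m"
  let ?d = "gdist ?V (mod_prod_edge knnM_E knnM_E)"
  have block_V: "block i j \<subseteq> ?V"
    using assms(3,4) by (auto simp: block_def knnM_V_def)
  have "x \<in> S \<or> y \<in> S" if xy: "x \<in> block i j" "y \<in> block i j" "x \<noteq> y" for x y
  proof (rule strong_resolving_contains_either[OF S])
    show "x \<in> ?V" "y \<in> ?V" "x \<noteq> y" using xy block_V by auto
    show "z = x" if "z \<in> ?V" "?d y z = ?d y x + ?d x z" for z
      using that \<open>x \<in> ?V\<close> \<open>y \<in> ?V\<close>
      by (intro mod_prod_dist_same_block_geodesic[OF xy]) (simp add: gdist_knnM_mod_prod[OF assms(1,2)])
    show "z = y" if "z \<in> ?V" "?d x z = ?d x y + ?d y z" for z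
      using that \<open>x \<in> ?V\<close> \<open>y \<in> ?V\<close>
      by (intro mod_prod_dist_same_block_geodesic[OF xy(2,1) xy(3)[symmetric]])
        (simp add: gdist_knnM_mod_prod[OF assms(1,2)])
  qed
  then have "card (block i j) \<le> Suc (card (S \<inter> block i j))"
    by (intro card_le_Suc_card_Int) (auto simp: block_def)
  then show ?thesis by (simp add: block_def)
qed

lemma card_strong_resolving_ge:
  assumes "3 \<le> n" "3 \<le> m"
    and "strong_resolving (knnM_V n \<times> knnM_V m) (mod_prod_edge knnM_E knnM_E) S"
  shows "3 * n * m \<le> card S"
proof -
  have "3 * n * m = (\<Sum>(i, j)\<in>{..<n} \<times> {..<m}. 3)" by (simp add: card_cartesian_product)
  also have "\<dots> \<le> (\<Sum>(i, j)\<in>{..<n} \<times> {..<m}. card (S \<inter> block i j))"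
    using three_le_card_Int_block[OF assms(1,2) _ _ assms(3)] by (intro sum_mono) auto
  also have "\<dots> = card S"
    using assms(3) by (intro card_eq_sum_blocks[symmetric]) (simp add: strong_resolving_def)
  finally show ?thesis .
qed

definition strong_basis :: "nat \<Rightarrow> nat \<Rightarrow> ((bool \<times> nat) \<times> (bool \<times> nat)) set" where
  "strong_basis n m = {p \<in> knnM_V n \<times> knnM_V m. fst (fst p) \<or> fst (snd p)}"

lemma card_strong_basis: "card (strong_basis n m) = 3 * n * m"
proof -
  have "card (strong_basis n m \<inter> block i j) = 3" if "i < n" "j < m" for i j
  proof -
    have "strong_basis n m \<inter> block i j = {((False,i),(True,j)), ((True,i),(False,j)), ((True,i),(True,j))}"
      using that by (auto simp: strong_basis_def block_def knnM_V_def)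
    then show ?thesis by simp
  qed
  then have "(\<Sum>(i, j)\<in>{..<n} \<times> {..<m}. card (strong_basis n m \<inter> block i j))
      = (\<Sum>(i, j)\<in>{..<n} \<times> {..<m}. 3)"
    by (intro sum.cong) auto
  moreover have "card (strong_basis n m)
      = (\<Sum>(i, j)\<in>{..<n} \<times> {..<m}. card (strong_basis n m \<inter> block i j))"
    by (rule card_eq_sum_blocks) (auto simp: strong_basis_def)
  ultimately show ?thesis by (simp add: card_cartesian_product)
qed

lemma finite_knnM_V: "finite (knnM_V n)"
proof -
  have "knnM_V n = UNIV \<times> {..<n}" by (auto simp: knnM_V_def)
  then show ?thesis by simp
qed

lemma mod_prod_dist_geodesic_to_strong_basis:
  assumes "3 \<le> m" "x \<in> knnM_V n \<times> knnM_V m - strong_basis n m"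
    "y \<in> knnM_V n \<times> knnM_V m - strong_basis n m" "x \<noteq> y"
  shows "\<exists>z\<in>strong_basis n m. mod_prod_dist y z = mod_prod_dist y x + mod_prod_dist x z"
proof -
  obtain i j k l where x: "x = ((False,i),(False,j))" and y: "y = ((False,k),(False,l))"
    and ijkl: "i < n" "j < m" "k < n" "l < m"
    using assms(2,3) by (auto simp: strong_basis_def knnM_V_def)
  obtain t where t: "t < m" "t \<noteq> j" "t \<noteq> l" using ex_less_avoiding[OF assms(1)] by blast
  let ?P = "\<lambda>z. z \<in> strong_basis n m \<and> mod_prod_dist y z = mod_prod_dist y x + mod_prod_dist x z"
  have "?P ((False,i),(True,l)) \<or> ?P ((True,k),(False,j)) \<or> ?P ((False,i),(True,t))"
    using ijkl t assms(4) unfolding x y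
    by (cases "i = k"; cases "j = l"; simp add: mod_prod_dist_defs strong_basis_def knnM_V_def)
  then show ?thesis by blast
qed

lemma strong_resolving_strong_basis:
  assumes "3 \<le> n" "3 \<le> m"
  shows "strong_resolving (knnM_V n \<times> knnM_V m) (mod_prod_edge knnM_E knnM_E) (strong_basis n m)"
proof (rule strong_resolvingI)
  let ?V = "knnM_V n \<times> knnM_V m"
  show basis_V: "strong_basis n m \<subseteq> ?V" by (auto simp: strong_basis_def)
  fix x y assume xy: "x \<in> ?V - strong_basis n m" "y \<in> ?V - strong_basis n m" "x \<noteq> y"
  then obtain z where "z \<in> strong_basis n m" "mod_prod_dist y z = mod_prod_dist y x + mod_prod_dist x z"
    using mod_prod_dist_geodesic_to_strong_basis[OF assms(2)] by blast
  moreover from this have "z \<in> ?V" using basis_V by blast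
  ultimately show "\<exists>z\<in>strong_basis n m. gdist ?V (mod_prod_edge knnM_E knnM_E) y z
      = gdist ?V (mod_prod_edge knnM_E knnM_E) y x + gdist ?V (mod_prod_edge knnM_E knnM_E) x z"
    using xy by (intro bexI[of _ z]) (simp_all add: gdist_knnM_mod_prod[OF assms])
qed

theorem mainTheorem14:
  fixes n m :: nat
  assumes "n \<ge> 3" and "m \<ge> 3"
  shows "strong_metric_dim (knnM_V n \<times> knnM_V m) (mod_prod_edge knnM_E knnM_E) = 3 * n * m"
  unfolding strong_metric_dim_def
proof (rule Least_equality)
  have "finite (strong_basis n m)"
    using finite_knnM_V by (auto simp: strong_basis_def intro: finite_subset)
  then show "\<exists>S. finite S \<and> strong_resolving (knnM_V n \<times> knnM_V m) (mod_prod_edge knnM_E knnM_E) S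
      \<and> card S = 3 * n * m"
    using strong_resolving_strong_basis[OF assms] card_strong_basis by blast
next
  show "\<And>k. \<exists>S. finite S \<and> strong_resolving (knnM_V n \<times> knnM_V m) (mod_prod_edge knnM_E knnM_E) S
      \<and> card S = k \<Longrightarrow> 3 * n * m \<le> k"
    using card_strong_resolving_ge[OF assms] by blast
qed

end
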